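(* For any signature $\Sigma$, the map $r_{A_p(\Sigma)}:\mathbf N(T(\Sigma))\to\mathbb K\langle A_p(\Sigma)\rangle$ is injective.
   Context: $\mathbb K$ is a field of characteristic zero. A signature is a set $\Sigma$ with arity map $|\cdot|:\Sigma\to\mathbb N$. A $\Sigma$-term is the leaf $\bot$ or $s(t_1,\dots,t_n)$ with $s$ of arity $n$, $t_i$ terms; degree = number of internal nodes. A $\Sigma$-forest is a finite word of terms; reduced if no term is $\bot$. $\mathbf N(T(\Sigma))$ is the vector space (natural Hopf algebra of the free operad) with basis $E_f$ indexed by reduced $\Sigma$-forests $f$. Internal nodes of a forest $f$ are identified with $1,\dots,\deg f$ by left-to-right preorder; $d_f(i)$ is the decoration of $i$; $i\to^f_j i'$ means $i'$ is the $j$-th child of $i$; roots are the roots of the terms. A $\Sigma$-forest-like alphabet is a set $A$ with arbitrary: subset $R^A$, subsets $D^A_s$ ($s\in\Sigma$), binary relations $\to^A_j$ ($j\ge1$). $\mathbb K\langle A\rangle$: noncommutative polynomials with possibly infinite support and bounded degree. A word $w\in A^*$ is $A$-compatible with $f$ if it has length $\deg f$, $w(i)\in R^A$ for each root $i$, $w(i)\in D^A_{d_f(i)}$ for each node $i$, and $i\to^f_j i'$ implies $w(i)\to^A_j w(i')$; $r_A$ is the linear map with $r_A(E_f)=\sum_{w\in A^*}[w\ A\text{-compatible with }f]\,w$. The alphabet of positions $A_p(\Sigma)=\{a^s_u: s\in\Sigma,\ u\in\mathbb N^*\}$ has root relation $\{a^s_{0^\ell}:s\in\Sigma,\ell\in\mathbb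 N\}$, $D_s=\{a^s_u:u\in\mathbb N^*\}$, and $a^s_u\to_j a^{s'}_v$ iff $v=u\,j\,0^\ell$ for some $\ell\in\mathbb N$. *)

theory Defs
  imports Main
begin

text \<open>A signature is a type 's of symbols together with an arity map ar :: 's => nat.\<close>

datatype 's trm = Leaf | Node 's "'s trm list"

fun wf_trm :: "('s \<Rightarrow> nat) \<Rightarrow> 's trm \<Rightarrow> bool" where
  "wf_trm ar Leaf = True"
| "wf_trm ar (Node s ts) = (length ts = ar s \<and> (\<forall>t\<in>set ts. wf_trm ar t))"

type_synonym 's forest = "'s trm list"

definition wf_forest :: "('s \<Rightarrow> nat) \<Rightarrow> 's forest \<Rightarrow> bool" where
  "wf_forest ar f = (\<forall>t\<in>set f. wf_trm ar t)"

definition reduced :: "'s forest \<Rightarrow> bool" where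
  "reduced f = (\<forall>t\<in>set f. t \<noteq> Leaf)"

text \<open>Internal nodes in left-to-right preorder, each given by its path (list of
  1-based child indices; for a forest the first entry is the index of the tree)
  together with its decoration.\<close>

fun nodes_trm :: "'s trm \<Rightarrow> (nat list \<times> 's) list"
and nodes_list :: "nat \<Rightarrow> 's trm list \<Rightarrow> (nat list \<times> 's) list" where
  "nodes_trm Leaf = []"
| "nodes_trm (Node s ts) = ([], s) # nodes_list 1 ts"
| "nodes_list k [] = []"
| "nodes_list k (t # ts) = map (\<lambda>(p, d). (k # p, d)) (nodes_trm t) @ nodes_list (Suc k) ts"

definition nodes :: "'s forest \<Rightarrow> (nat list \<times> 's) list" where
  "nodes f = nodes_list 1 f"

text \<open>Node i (0-based here, i < deg f) is
  nodes f ! i; its decoration is snd (nodes f ! i); it is a root iff its path has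
  length 1; node i' is the j-th child of node i iff path i' = path i @ [j].\<close>

definition deg :: "'s forest \<Rightarrow> nat" where
  "deg f = length (nodes f)"

text \<open>An alphabet is given by a letter type 'a with RA (roots), DA s (decorations)
  and relA j (the relation ->_j).\<close>

definition compatible ::
  "'a set \<Rightarrow> ('s \<Rightarrow> 'a set) \<Rightarrow> (nat \<Rightarrow> 'a \<Rightarrow> 'a \<Rightarrow> bool) \<Rightarrow> 'a list \<Rightarrow> 's forest \<Rightarrow> bool" where
  "compatible RA DA relA w f \<longleftrightarrow>
     length w = deg f \<and>
     (\<forall>i<deg f. length (fst (nodes f ! i)) = 1 \<longrightarrow> w ! i \<in> RA) \<and>
     (\<forall>i<deg f. w ! i \<in> DA (snd (nodes f ! i))) \<and>
     (\<forall>i<deg f. \<forall>i'<deg f. \<forall>j. fst (nodes f ! i') = fst (nodes f ! i) @ [j]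
          \<longrightarrow> relA j (w ! i) (w ! i'))"

text \<open>N(T(Sigma)): finitely supported coefficient functions on reduced (well-formed)
  forests; c corresponds to sum_f c f * E_f.\<close>

definition NT :: "('s \<Rightarrow> nat) \<Rightarrow> ('s forest \<Rightarrow> 'k::field_char_0) set" where
  "NT ar = {c. finite {f. c f \<noteq> 0} \<and> (\<forall>f. c f \<noteq> 0 \<longrightarrow> wf_forest ar f \<and> reduced f)}"

text \<open>Noncommutative polynomials K<A> (possibly infinite support, bounded degree)
  are represented as coefficient functions 'a list => 'k. r_A is the linear
  extension of E_f |-> sum of compatible words.\<close>

definition rA ::
  "'a set \<Rightarrow> ('s \<Rightarrow> 'a set) \<Rightarrow> (nat \<Rightarrow> 'a \<Rightarrow> 'a \<Rightarrow> bool) \<Rightarrow>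
   ('s forest \<Rightarrow> 'k::field_char_0) \<Rightarrow> ('a list \<Rightarrow> 'k)" where
  "rA RA DA relA c = (\<lambda>w. \<Sum>f\<in>{f. c f \<noteq> 0}. c f * (if compatible RA DA relA w f then 1 else 0))"

text \<open>Letters a^s_u are pairs (s, u) with u a word over nat.\<close>

definition Ap_root :: "('s \<times> nat list) set" where
  "Ap_root = {(s, replicate l 0) | s l. True}"

definition Ap_dec :: "'s \<Rightarrow> ('s \<times> nat list) set" where
  "Ap_dec s = {(s, u) | u. True}"

definition Ap_rel :: "nat \<Rightarrow> ('s \<times> nat list) \<Rightarrow> ('s \<times> nat list) \<Rightarrow> bool" where
  "Ap_rel j a b \<longleftrightarrow> (\<exists>l. snd b = snd a @ [j] @ replicate l 0)"

end

theory Submission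
  imports Defs
begin

text \<open>Write each internal node of a forest as the letter a^s_u, where s is its decoration
  and u its path inside its own tree; call the resulting word the position word of the
  forest. It is A_p-compatible with the forest. Conversely, child indices are positive,
  so paths never contain 0; hence the padding 0^l allowed by the root set and by the
  child relations of A_p must be empty, and every forest compatible with the position
  word of f has the same position word. Since a reduced forest of correct arities is
  determined by its position word, the coefficient of the position word of f in r(c)
  is exactly the coefficient of E_f in c.\<close>

lemma nodes_list_paths_nonempty: "x \<in> set (nodes_list k ts) \<Longrightarrow> fst x \<noteq> []"
  by (induction ts arbitrary: k) auto

lemma nodes_paths_zero_free:
  fixes t :: "'s trm" and ts :: "'s trm list"
  shows "x \<in> set (nodes_trm t) \<Longrightarrow> 0 \<notin> set (fst x)"
    and "0 < k \<Longrightarrow> x \<in> set (nodes_list k ts) \<Longrightarrow> 0 \<notin> set (fst x)"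
  by (induction t and k ts arbitrary: x and x rule: nodes_trm_nodes_list.induct) auto

lemma set_nodes_list:
  "set (nodes_list k ts) = (\<Union>i<length ts. (\<lambda>(p, d). ((k + i) # p, d)) ` set (nodes_trm (ts ! i)))"
proof (induction ts arbitrary: k)
  case (Cons t ts)
  show ?case
    by (simp add: Cons.IH lessThan_Suc_eq_insert_0 image_Suc_lessThan[symmetric]
        del: image_Suc_lessThan)
qed simp

lemma mem_set_nodes_list_iff:
  "(q, d) \<in> set (nodes_list k ts) \<longleftrightarrow>
   (\<exists>i p. q = (k + i) # p \<and> i < length ts \<and> (p, d) \<in> set (nodes_trm (ts ! i)))"
  by (auto simp: set_nodes_list)

lemma mem_set_nodes_trm_child_iff:
  "i < length ts \<Longrightarrow>
   (p, d) \<in> set (nodes_trm (ts ! i)) \<longleftrightarrow> (Suc i # p, d) \<in> set (nodes_trm (Node s ts))"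
  by (auto simp: mem_set_nodes_list_iff)

lemma nodes_trm_parent:
  "(p @ [j], d) \<in> set (nodes_trm t) \<Longrightarrow> \<exists>d'. (p, d') \<in> set (nodes_trm t)"
proof (induction t arbitrary: p)
  case (Node s ts)
  show ?case
  proof (cases p)
    case (Cons k p')
    with Node.prems obtain i where i: "k = Suc i" "i < length ts"
      and "(p' @ [j], d) \<in> set (nodes_trm (ts ! i))"
      by (auto simp: mem_set_nodes_list_iff)
    with Node.IH obtain d' where "(p', d') \<in> set (nodes_trm (ts ! i))"
      by (meson nth_mem)
    with i Cons show ?thesis
      by (auto simp: mem_set_nodes_list_iff)
  qed auto
qed simp

lemma nodes_parent:
  assumes "(p @ [j], d) \<in> set (nodes f)" "p \<noteq> []"
  shows "\<exists>d'. (p, d') \<in> set (nodes f)"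
proof -
  obtain k p' where p: "p = k # p'"
    using assms(2) by (cases p) auto
  with assms(1) obtain i where i: "k = Suc i" "i < length f"
    and "(p' @ [j], d) \<in> set (nodes_trm (f ! i))"
    by (auto simp: nodes_def mem_set_nodes_list_iff)
  then obtain d' where "(p', d') \<in> set (nodes_trm (f ! i))"
    by (meson nodes_trm_parent)
  with i p show ?thesis
    by (auto simp: nodes_def mem_set_nodes_list_iff)
qed

text \<open>Arities matter: without them trailing leaves are invisible, e.g. a node with one
  leaf child and the same node with two leaf children have the same internal nodes.\<close>

lemma nodes_trm_inj:
  "wf_trm ar t \<Longrightarrow> wf_trm ar t' \<Longrightarrow> set (nodes_trm t) = set (nodes_trm t') \<Longrightarrow> t = t'"
proof (induction t arbitrary: t')
  case Leaf
  then show ?case by (cases t') auto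
next
  case (Node s ts)
  then obtain s' ts' where t': "t' = Node s' ts'"
    by (cases t') auto
  have "([], s) \<in> set (nodes_trm t')"
    using Node.prems(3) by auto
  then have s': "s' = s"
    using t' nodes_list_paths_nonempty by fastforce
  have len: "length ts' = length ts"
    using Node.prems t' s' by simp
  have "ts ! i = ts' ! i" if i: "i < length ts" for i
  proof (rule Node.IH)
    show "ts ! i \<in> set ts" "wf_trm ar (ts ! i)" "wf_trm ar (ts' ! i)"
      using Node.prems t' i len by auto
    have "(p, d) \<in> set (nodes_trm (ts ! i)) \<longleftrightarrow> (p, d) \<in> set (nodes_trm (ts' ! i))" for p d
      using mem_set_nodes_trm_child_iff[of i ts p d s] mem_set_nodes_trm_child_iff[of i ts' p d s]
        Node.prems(3) t' s' i len by metis
    then show "set (nodes_trm (ts ! i)) = set (nodes_trm (ts' ! i))"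
      by auto
  qed
  with t' s' len show ?case
    by (simp add: list_eq_iff_nth_eq)
qed

lemma nodes_trm_non_Leaf:
  "t \<noteq> Leaf \<Longrightarrow> \<exists>s rest. nodes_trm t = ([], s) # rest \<and> (\<forall>x\<in>set rest. fst x \<noteq> [])"
  by (cases t) (auto dest: nodes_list_paths_nonempty)

text \<open>The nodes of a tree are its root followed by non-root nodes, so in the
  concatenated preorder of a reduced forest the next root marks where the next tree starts.\<close>

lemma split_concat_nodes_trm:
  assumes "\<forall>x\<in>set r. fst x \<noteq> []" "reduced us"
  shows "takeWhile (\<lambda>x. fst x \<noteq> []) (r @ concat (map nodes_trm us)) = r"
    and "dropWhile (\<lambda>x. fst x \<noteq> []) (r @ concat (map nodes_trm us)) = concat (map nodes_trm us)"
proof -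
  have "concat (map nodes_trm us) = [] \<or> fst (hd (concat (map nodes_trm us))) = []"
    using assms(2) by (cases us) (auto simp: reduced_def dest!: nodes_trm_non_Leaf)
  then have "takeWhile (\<lambda>x. fst x \<noteq> []) (concat (map nodes_trm us)) = [] \<and>
      dropWhile (\<lambda>x. fst x \<noteq> []) (concat (map nodes_trm us)) = concat (map nodes_trm us)"
    by (simp only: takeWhile_eq_Nil_iff dropWhile_eq_self_iff) simp
  with assms(1) show "takeWhile (\<lambda>x. fst x \<noteq> []) (r @ concat (map nodes_trm us)) = r"
    "dropWhile (\<lambda>x. fst x \<noteq> []) (r @ concat (map nodes_trm us)) = concat (map nodes_trm us)"
    by (simp_all add: takeWhile_append2 dropWhile_append2)
qed

lemma concat_nodes_trm_inj:
  "wf_forest ar f \<Longrightarrow> reduced f \<Longrightarrow> wf_forest ar g \<Longrightarrow> reduced g \<Longrightarrow>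
   concat (map nodes_trm f) = concat (map nodes_trm g) \<Longrightarrow> f = g"
proof (induction f arbitrary: g)
  case Nil
  then show ?case
    by (cases g) (auto simp: reduced_def dest!: nodes_trm_non_Leaf)
next
  case (Cons t ts)
  from Cons.prems obtain s rest where t: "nodes_trm t = ([], s) # rest" "\<forall>x\<in>set rest. fst x \<noteq> []"
    by (auto simp: reduced_def dest!: nodes_trm_non_Leaf)
  with Cons.prems obtain t' ts' where g: "g = t' # ts'"
    by (cases g) auto
  from Cons.prems g obtain s' rest' where t': "nodes_trm t' = ([], s') # rest'" "\<forall>x\<in>set rest'. fst x \<noteq> []"
    by (auto simp: reduced_def dest!: nodes_trm_non_Leaf)
  have red: "reduced ts" "reduced ts'"
    using Cons.prems g by (auto simp: reduced_def)
  have eq: "rest @ concat (map nodes_trm ts) = rest' @ concat (map nodes_trm ts')" "s = s'"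
    using Cons.prems(5) g t t' by auto
  then have "rest = rest'" "concat (map nodes_trm ts) = concat (map nodes_trm ts')"
    using split_concat_nodes_trm[OF t(2) red(1)] split_concat_nodes_trm[OF t'(2) red(2)] by metis+
  with eq t t' Cons.prems Cons.IH[of ts'] red g show ?case
    using nodes_trm_inj[of ar t t'] by (auto simp: wf_forest_def)
qed

definition position_word :: "'s forest \<Rightarrow> ('s \<times> nat list) list" where
  "position_word f = map (\<lambda>(p, d). (d, tl p)) (nodes f)"

lemma length_position_word [simp]: "length (position_word f) = deg f"
  by (simp add: position_word_def deg_def)

lemma nth_position_word:
  "i < deg f \<Longrightarrow> position_word f ! i = (snd (nodes f ! i), tl (fst (nodes f ! i)))"
  by (simp add: position_word_def deg_def case_prod_beta)

lemma position_word_eq_concat_nodes_trm: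
  "position_word f = map (\<lambda>(p, d). (d, p)) (concat (map nodes_trm f))"
proof -
  have "map (\<lambda>(p, d). (d, tl p)) (nodes_list k ts) = map (\<lambda>(p, d). (d, p)) (concat (map nodes_trm ts))"
    for k and ts :: "'s trm list"
    by (induction ts arbitrary: k) (auto simp: case_prod_beta)
  then show ?thesis
    by (simp add: position_word_def nodes_def)
qed

lemma position_word_inj:
  assumes "wf_forest ar f" "reduced f" "wf_forest ar g" "reduced g"
    and "position_word f = position_word g"
  shows "f = g"
proof -
  have "map (\<lambda>(d, p). (p, d)) (position_word f) = map (\<lambda>(d, p). (p, d)) (position_word g)"
    using assms(5) by simp
  then have "concat (map nodes_trm f) = concat (map nodes_trm g)"
    by (simp add: position_word_eq_concat_nodes_trm comp_def case_prod_beta)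
  with assms show ?thesis
    using concat_nodes_trm_inj by blast
qed

lemma nodes_path_nonempty: "i < deg f \<Longrightarrow> fst (nodes f ! i) \<noteq> []"
  using nodes_list_paths_nonempty[of "nodes f ! i" 1 f] by (simp add: deg_def nodes_def)

lemma position_word_zero_free: "i < deg f \<Longrightarrow> 0 \<notin> set (snd (position_word f ! i))"
  using nodes_paths_zero_free(2)[of 1 "nodes f ! i" f] nodes_path_nonempty[of i f]
  by (cases "fst (nodes f ! i)") (auto simp: nth_position_word deg_def nodes_def)

lemma compatible_position_word: "compatible Ap_root Ap_dec Ap_rel (position_word f) f"
  unfolding compatible_def
proof (intro conjI allI impI)
  fix i assume "i < deg f" "length (fst (nodes f ! i)) = 1"
  then show "position_word f ! i \<in> Ap_root"
    by (auto simp: nth_position_word Ap_root_def length_Suc_conv intro!: exI[of _ 0])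
next
  fix i i' j assume i: "i < deg f" "i' < deg f" "fst (nodes f ! i') = fst (nodes f ! i) @ [j]"
  then show "Ap_rel j (position_word f ! i) (position_word f ! i')"
    using nodes_path_nonempty[OF i(1)]
    by (auto simp: nth_position_word Ap_rel_def intro!: exI[of _ 0])
qed (auto simp: nth_position_word Ap_dec_def)

lemma Ap_root_zero_free: "a \<in> Ap_root \<Longrightarrow> 0 \<notin> set (snd a) \<Longrightarrow> snd a = []"
  by (auto simp: Ap_root_def)

lemma Ap_rel_zero_free: "Ap_rel j a b \<Longrightarrow> 0 \<notin> set (snd b) \<Longrightarrow> snd b = snd a @ [j]"
  by (auto simp: Ap_rel_def)

lemma compatible_position_word_imp_eq:
  assumes compat: "compatible Ap_root Ap_dec Ap_rel (position_word f) g"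
  shows "position_word g = position_word f"
proof -
  let ?w = "position_word f"
  have deg: "deg g = deg f"
    using compat by (simp add: compatible_def)
  have zero_free: "0 \<notin> set (snd (?w ! i))" if "i < deg g" for i
    using position_word_zero_free that deg by simp
  have positions: "snd (?w ! i) = tl p" if "i < deg g" "fst (nodes g ! i) = p" for p i
    using that
  proof (induction p arbitrary: i rule: rev_induct)
    case Nil
    then show ?case using nodes_path_nonempty by blast
  next
    case (snoc j q)
    show ?case
    proof (cases "q = []")
      case True
      then have "?w ! i \<in> Ap_root"
        using compat snoc.prems by (simp add: compatible_def)
      from Ap_root_zero_free[OF this zero_free[OF snoc.prems(1)]] True show ?thesis
        by simp
    next
      case False
      have "nodes g ! i \<in> set (nodes g)"
        using snoc.prems(1) by (simp add: deg_def)
      then have "(q @ [j], snd (nodes g ! i)) \<in> set (nodes g)"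
        using snoc.prems(2) by (metis prod.collapse)
      with False obtain d' where "(q, d') \<in> set (nodes g)"
        using nodes_parent by metis
      then obtain i0 where i0: "i0 < deg g" "fst (nodes g ! i0) = q"
        by (metis deg_def fst_conv in_set_conv_nth)
      then have "Ap_rel j (?w ! i0) (?w ! i)"
        using compat snoc.prems by (simp add: compatible_def)
      from Ap_rel_zero_free[OF this zero_free[OF snoc.prems(1)]] snoc.IH[OF i0] False
      show ?thesis
        by simp
    qed
  qed
  have decorations: "fst (?w ! i) = snd (nodes g ! i)" if "i < deg g" for i
    using compat that by (auto simp: compatible_def Ap_dec_def)
  show ?thesis
  proof (rule nth_equalityI)
    fix i assume "i < length (position_word g)"
    then show "position_word g ! i = ?w ! i"
      by (simp add: nth_position_word positions decorations prod_eq_iff)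
  qed (simp add: deg)
qed

lemma rA_position_word:
  fixes c :: "'s forest \<Rightarrow> 'k::field_char_0"
  assumes c: "c \<in> NT ar" and f: "wf_forest ar f" "reduced f"
  shows "rA Ap_root Ap_dec Ap_rel c (position_word f) = c f"
proof -
  have "compatible Ap_root Ap_dec Ap_rel (position_word f) g \<longleftrightarrow> g = f" if "c g \<noteq> 0" for g
    using c that f compatible_position_word[of f] compatible_position_word_imp_eq[of f g]
      position_word_inj[of ar g f]
    by (auto simp: NT_def)
  then have "rA Ap_root Ap_dec Ap_rel c (position_word f) = (\<Sum>g\<in>{g. c g \<noteq> 0}. if g = f then c g else 0)"
    unfolding rA_def by (intro sum.cong) auto
  also have "\<dots> = c f"
    using c by (simp add: NT_def sum.delta')
  finally show ?thesis .
qed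

theorem proposition4p7:
  fixes ar :: "'s \<Rightarrow> nat"
  shows "inj_on (rA Ap_root Ap_dec Ap_rel :: ('s forest \<Rightarrow> 'k::field_char_0) \<Rightarrow> _)
           (NT ar)"
proof (rule inj_onI, rule ext)
  fix c1 c2 :: "'s forest \<Rightarrow> 'k" and f
  assume c: "c1 \<in> NT ar" "c2 \<in> NT ar"
    and eq: "rA Ap_root Ap_dec Ap_rel c1 = rA Ap_root Ap_dec Ap_rel c2"
  show "c1 f = c2 f"
  proof (cases "c1 f = 0 \<and> c2 f = 0")
    case False
    then have "wf_forest ar f" "reduced f"
      using c by (auto simp: NT_def)
    then show ?thesis
      using rA_position_word[OF c(1)] rA_position_word[OF c(2)] eq by metis
  qed simp
qed

end
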